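(* Let $n\ge3$, $I$ a finite nonempty set, $G=\mathrm{H}_n^{(I)}$ with projections $\pi_i\colon G\to\mathrm{H}_n$, and $H\le G$. If $HM(G)=G$ and $\pi_i(H)=\mathrm{H}_n$ for all $i\in I$, then $H=G$.
   Context: $M(G)$ is the intersection of all maximal normal subgroups of a finite group $G$. $V=\mathbb{F}_2^n$, $\mathrm{H}_n=V\rtimes S_n$ with $S_n$ permuting coordinates; total sign $\chi(x\tau)=(-1)^{\sum_ix_i}$; $\mathrm{H}_n^{(I)}=\{(g_i)_{i\in I}\in\mathrm{H}_n^I:\chi(g_i)=\chi(g_j)\ \forall i,j\in I\}$. *)

theory Defs
  imports "HOL-Algebra.Algebra" "HOL-Combinatorics.Permutations"
begin

text \<open>The hyperoctahedral group H_n = F_2^n semidirect S_n, realised concretely as pairs (x, s)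
  with x a 0/1-vector supported on {..<n} (as a boolean function) and s a permutation of {..<n}.
  Multiplication (x,s)(y,t) = (x o t + y, s o t) (addition in F_2 = xor).\<close>

definition Hn_carrier :: "nat \<Rightarrow> ((nat \<Rightarrow> bool) \<times> (nat \<Rightarrow> nat)) set" where
  "Hn_carrier n = {(x, s). (\<forall>i. n \<le> i \<longrightarrow> \<not> x i) \<and> s permutes {..<n}}"

definition Hn_mult :: "(nat \<Rightarrow> bool) \<times> (nat \<Rightarrow> nat) \<Rightarrow> (nat \<Rightarrow> bool) \<times> (nat \<Rightarrow> nat) \<Rightarrow> (nat \<Rightarrow> bool) \<times> (nat \<Rightarrow> nat)" where
  "Hn_mult g h = (\<lambda>i. fst g (snd h i) \<noteq> fst h i, snd g \<circ> snd h)"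

definition Hn :: "nat \<Rightarrow> ((nat \<Rightarrow> bool) \<times> (nat \<Rightarrow> nat)) monoid" where
  "Hn n = \<lparr> partial_object.carrier = Hn_carrier n, monoid.mult = Hn_mult, monoid.one = (\<lambda>_. False, id) \<rparr>"

text \<open>Total sign: True encodes +1 (even number of nonzero coordinates), False encodes -1.\<close>
definition chi :: "nat \<Rightarrow> (nat \<Rightarrow> bool) \<times> (nat \<Rightarrow> nat) \<Rightarrow> bool" where
  "chi n g = even (card {i. i < n \<and> fst g i})"

definition HnI :: "nat \<Rightarrow> 'a set \<Rightarrow> ('a \<Rightarrow> (nat \<Rightarrow> bool) \<times> (nat \<Rightarrow> nat)) monoid" where
  "HnI n I = \<lparr> partial_object.carrier = {g. g \<in> extensional I \<and> (\<forall>i\<in>I. g i \<in> carrier (Hn n))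
                             \<and> (\<forall>i\<in>I. \<forall>j\<in>I. chi n (g i) = chi n (g j))},
              monoid.mult = (\<lambda>g h. \<lambda>i\<in>I. g i \<otimes>\<^bsub>Hn n\<^esub> h i),
              monoid.one = (\<lambda>i\<in>I. \<one>\<^bsub>Hn n\<^esub>) \<rparr>"

definition max_normal :: "'g set \<Rightarrow> ('g, 'b) monoid_scheme \<Rightarrow> bool" where
  "max_normal N G \<longleftrightarrow> N \<lhd> G \<and> N \<noteq> carrier G \<and>
     (\<forall>K. K \<lhd> G \<longrightarrow> N \<subseteq> K \<longrightarrow> K = N \<or> K = carrier G)"

text \<open>M(G): intersection of all maximal normal subgroups (= carrier G if there are none).\<close>
definition Mgrp :: "('g, 'b) monoid_scheme \<Rightarrow> 'g set" where
  "Mgrp G = {g \<in> carrier G. \<forall>N. max_normal N G \<longrightarrow> g \<in> N}"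

end

theory Submission
  imports Defs
begin

text \<open>Induction on \<open>I\<close>. Of \<open>H M(G) = G\<close> only one consequence is used: \<open>H\<close> lies in the
  kernel of no nontrivial homomorphism \<open>G \<rightarrow> F\<^sub>2\<close>, since such a kernel is maximal normal. This
  property and the surjectivity of the projections pass to the image of \<open>H\<close> in the group indexed
  by \<open>J = I - {i}\<close>, which is therefore everything. Then \<open>H\<close> is everything as soon as its fibre
  \<open>N = {a. (a at i, 1 elsewhere) \<in> H}\<close> is all of \<open>ker \<chi>\<close>. Now \<open>N\<close> is a normal subgroup of \<open>H\<^sub>n\<close>
  inside \<open>ker \<chi>\<close>, and some element of \<open>N\<close> has odd permutation part, for otherwise the sign of the
  permutation at \<open>i\<close> would induce a nontrivial homomorphism \<open>G \<rightarrow> F\<^sub>2\<close> vanishing on \<open>H\<close>. Such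
  a normal subgroup contains all even sign-change vectors (by commutators) and has all of \<open>S\<^sub>n\<close> as
  permutation parts, so it is \<open>ker \<chi>\<close>.\<close>

text \<open>Plain \<open>inv\<close> would be read as the group inverse of HOL-Algebra.\<close>

abbreviation perm_inv :: "(nat \<Rightarrow> nat) \<Rightarrow> nat \<Rightarrow> nat" where
  "perm_inv f \<equiv> inv_into UNIV f"

lemma even_card_symdiff:
  assumes "finite A" "finite B"
  shows "even (card ((A - B) \<union> (B - A))) \<longleftrightarrow> (even (card A) \<longleftrightarrow> even (card B))"
proof -
  have "A \<union> B = ((A - B) \<union> (B - A)) \<union> (A \<inter> B)" and "((A - B) \<union> (B - A)) \<inter> (A \<inter> B) = {}"
    by blast+
  then have "card (A \<union> B) = card ((A - B) \<union> (B - A)) + card (A \<inter> B)"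
    using assms by (metis card_Un_disjoint finite_Int finite_Un finite_Diff)
  with card_Un_Int[OF assms] show ?thesis by presburger
qed

subsection \<open>The hyperoctahedral group\<close>

lemma mem_Hn_iff: "(x, s) \<in> carrier (Hn n) \<longleftrightarrow> (\<forall>i. n \<le> i \<longrightarrow> \<not> x i) \<and> s permutes {..<n}"
  by (simp add: Hn_def Hn_carrier_def)

lemma Hn_mult_Pair [simp]: "(x, s) \<otimes>\<^bsub>Hn n\<^esub> (y, t) = (\<lambda>i. x (t i) \<noteq> y i, s \<circ> t)"
  by (simp add: Hn_def Hn_mult_def)

lemma Hn_one [simp]: "\<one>\<^bsub>Hn n\<^esub> = (\<lambda>_. False, id)"
  by (simp add: Hn_def)

lemma Hn_inverse_mem:
  assumes "(x, s) \<in> carrier (Hn n)"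
  shows "(x \<circ> perm_inv s, perm_inv s) \<in> carrier (Hn n)"
    and "(x \<circ> perm_inv s, perm_inv s) \<otimes>\<^bsub>Hn n\<^esub> (x, s) = \<one>\<^bsub>Hn n\<^esub>"
proof -
  have s: "s permutes {..<n}" using assms by (simp add: mem_Hn_iff)
  then show "(x \<circ> perm_inv s, perm_inv s) \<in> carrier (Hn n)"
    using assms by (auto simp: mem_Hn_iff permutes_inv permutes_not_in[OF permutes_inv[OF s]])
  show "(x \<circ> perm_inv s, perm_inv s) \<otimes>\<^bsub>Hn n\<^esub> (x, s) = \<one>\<^bsub>Hn n\<^esub>"
    using s by (simp add: permutes_inverses permutes_inv_o)
qed

lemma group_Hn: "group (Hn n)"
proof (rule groupI)
  fix a b assume "a \<in> carrier (Hn n)" "b \<in> carrier (Hn n)"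
  then show "a \<otimes>\<^bsub>Hn n\<^esub> b \<in> carrier (Hn n)"
    by (cases a, cases b) (auto simp: mem_Hn_iff permutes_compose permutes_not_in)
next
  fix a b c :: "(nat \<Rightarrow> bool) \<times> (nat \<Rightarrow> nat)"
  show "a \<otimes>\<^bsub>Hn n\<^esub> b \<otimes>\<^bsub>Hn n\<^esub> c = a \<otimes>\<^bsub>Hn n\<^esub> (b \<otimes>\<^bsub>Hn n\<^esub> c)"
    by (cases a, cases b, cases c) (auto simp: fun_eq_iff)
next
  fix a assume a: "a \<in> carrier (Hn n)"
  then show "\<one>\<^bsub>Hn n\<^esub> \<otimes>\<^bsub>Hn n\<^esub> a = a" by (cases a) simp
  from a show "\<exists>b\<in>carrier (Hn n). b \<otimes>\<^bsub>Hn n\<^esub> a = \<one>\<^bsub>Hn n\<^esub>"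
    by (cases a) (metis Hn_inverse_mem)
qed (simp add: mem_Hn_iff permutes_id)

lemma Hn_inv_Pair:
  assumes "(x, s) \<in> carrier (Hn n)"
  shows "inv\<^bsub>Hn n\<^esub> (x, s) = (x \<circ> perm_inv s, perm_inv s)"
  by (rule group.inv_equality[OF group_Hn Hn_inverse_mem(2)[OF assms] assms Hn_inverse_mem(1)[OF assms]])

lemma snd_Hn_mult: "snd (a \<otimes>\<^bsub>Hn n\<^esub> b) = snd a \<circ> snd b"
  by (cases a, cases b) simp

lemma snd_Hn_inv: "a \<in> carrier (Hn n) \<Longrightarrow> snd (inv\<^bsub>Hn n\<^esub> a) = perm_inv (snd a)"
  by (cases a) (simp add: Hn_inv_Pair)

lemma permutes_snd_Hn: "a \<in> carrier (Hn n) \<Longrightarrow> snd a permutes {..<n}"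
  by (cases a) (simp add: mem_Hn_iff)

lemma chi_mult:
  assumes "a \<in> carrier (Hn n)" "b \<in> carrier (Hn n)"
  shows "chi n (a \<otimes>\<^bsub>Hn n\<^esub> b) \<longleftrightarrow> (chi n a \<longleftrightarrow> chi n b)"
proof -
  obtain x s y t where ab: "a = (x, s)" "b = (y, t)" by fastforce
  have t: "t permutes {..<n}" using assms ab by (simp add: mem_Hn_iff)
  define A where "A = {i. i < n \<and> x i}"
  define B where "B = {i. i < n \<and> y i}"
  have "{i. i < n \<and> x (t i)} = t -` A"
    using permutes_in_image[OF t] by (auto simp: A_def)
  then have "card {i. i < n \<and> x (t i)} = card A"
    using t by (simp add: card_vimage_inj permutes_inj permutes_surj)
  moreover have "{i. i < n \<and> x (t i) \<noteq> y i} = ({i. i < n \<and> x (t i)} - B) \<union> (B - {i. i < n \<and> x (t i)})"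
    by (auto simp: B_def)
  ultimately show ?thesis
    using ab even_card_symdiff[of "{i. i < n \<and> x (t i)}" B] by (simp add: chi_def A_def B_def)
qed

lemma chi_one [simp]: "chi n (\<lambda>_. False, id)"
  by (simp add: chi_def)

lemma chi_inv:
  assumes "a \<in> carrier (Hn n)"
  shows "chi n (inv\<^bsub>Hn n\<^esub> a) \<longleftrightarrow> chi n a"
  using chi_mult[OF group.inv_closed[OF group_Hn assms] assms] group.l_inv[OF group_Hn assms] by auto

definition equal_chi :: "nat \<Rightarrow> 'a set \<Rightarrow> ('a \<Rightarrow> (nat \<Rightarrow> bool) \<times> (nat \<Rightarrow> nat)) set" where
  "equal_chi n I = {g \<in> (\<Pi>\<^sub>E i\<in>I. carrier (Hn n)). \<forall>i\<in>I. \<forall>j\<in>I. chi n (g i) = chi n (g j)}"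

lemma HnI_eq_product_group: "HnI n I = (product_group I (\<lambda>_. Hn n))\<lparr>carrier := equal_chi n I\<rparr>"
proof -
  have "{g. g \<in> extensional I \<and> (\<forall>i\<in>I. g i \<in> carrier (Hn n)) \<and> (\<forall>i\<in>I. \<forall>j\<in>I. chi n (g i) = chi n (g j))}
      = equal_chi n I"
    by (auto simp: equal_chi_def PiE_iff)
  then show ?thesis unfolding HnI_def product_group_def by (simp only: partial_object.update_convs)
qed

lemma subgroup_equal_chi: "subgroup (equal_chi n I) (product_group I (\<lambda>_. Hn n))"
proof -
  interpret P: group "product_group I (\<lambda>_. Hn n)" by (simp add: group_Hn)
  have mem: "g \<in> equal_chi n I \<longleftrightarrow> g \<in> carrier (product_group I (\<lambda>_. Hn n)) \<and>
      (\<forall>i\<in>I. \<forall>j\<in>I. chi n (g i) = chi n (g j))" for g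
    unfolding equal_chi_def carrier_product_group by blast
  show ?thesis
  proof (rule P.subgroupI)
    show "equal_chi n I \<subseteq> carrier (product_group I (\<lambda>_. Hn n))"
      using mem by blast
    have "\<one>\<^bsub>product_group I (\<lambda>_. Hn n)\<^esub> \<in> equal_chi n I"
      unfolding mem using P.one_closed by simp
    then show "equal_chi n I \<noteq> {}" by blast
  next
    fix g h assume "g \<in> equal_chi n I" and "h \<in> equal_chi n I"
    then have g: "g \<in> carrier (product_group I (\<lambda>_. Hn n))" "\<And>i j. i \<in> I \<Longrightarrow> j \<in> I \<Longrightarrow> chi n (g i) = chi n (g j)"
      and h: "h \<in> carrier (product_group I (\<lambda>_. Hn n))" "\<And>i j. i \<in> I \<Longrightarrow> j \<in> I \<Longrightarrow> chi n (h i) = chi n (h j)"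
      unfolding mem by blast+
    have gh: "g i \<in> carrier (Hn n)" "h i \<in> carrier (Hn n)" if "i \<in> I" for i
      using g(1) h(1) that by auto
    show "g \<otimes>\<^bsub>product_group I (\<lambda>_. Hn n)\<^esub> h \<in> equal_chi n I"
      unfolding mem
    proof (intro conjI ballI)
      show "g \<otimes>\<^bsub>product_group I (\<lambda>_. Hn n)\<^esub> h \<in> carrier (product_group I (\<lambda>_. Hn n))"
        using g(1) h(1) by (rule P.m_closed)
      fix i j assume "i \<in> I" "j \<in> I"
      then show "chi n ((g \<otimes>\<^bsub>product_group I (\<lambda>_. Hn n)\<^esub> h) i) = chi n ((g \<otimes>\<^bsub>product_group I (\<lambda>_. Hn n)\<^esub> h) j)"
        using gh g(2)[of i j] h(2)[of i j] by (simp add: chi_mult del: Hn_mult_Pair)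
    qed
    show "inv\<^bsub>product_group I (\<lambda>_. Hn n)\<^esub> g \<in> equal_chi n I"
      unfolding mem
    proof (intro conjI ballI)
      show "inv\<^bsub>product_group I (\<lambda>_. Hn n)\<^esub> g \<in> carrier (product_group I (\<lambda>_. Hn n))"
        using g(1) by (rule P.inv_closed)
      fix i j assume "i \<in> I" "j \<in> I"
      then show "chi n ((inv\<^bsub>product_group I (\<lambda>_. Hn n)\<^esub> g) i) = chi n ((inv\<^bsub>product_group I (\<lambda>_. Hn n)\<^esub> g) j)"
        using gh g(2)[of i j] inv_product_group[of g I "\<lambda>_. Hn n"] g(1) by (simp add: chi_inv group_Hn)
    qed
  qed
qed

lemma group_HnI: "group (HnI n I)"
  unfolding HnI_eq_product_group
  by (rule group.subgroup_imp_group[OF product_group subgroup_equal_chi]) (rule group_Hn)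

lemma mem_HnI_iff:
  "g \<in> carrier (HnI n I) \<longleftrightarrow> g \<in> (\<Pi>\<^sub>E i\<in>I. carrier (Hn n)) \<and> (\<forall>i\<in>I. \<forall>j\<in>I. chi n (g i) = chi n (g j))"
  by (simp add: HnI_eq_product_group equal_chi_def)

lemma HnI_memD:
  assumes "g \<in> carrier (HnI n I)"
  shows "g \<in> extensional I" "\<And>i. i \<in> I \<Longrightarrow> g i \<in> carrier (Hn n)"
    "\<And>i j. i \<in> I \<Longrightarrow> j \<in> I \<Longrightarrow> chi n (g i) = chi n (g j)"
  using assms unfolding mem_HnI_iff PiE_iff by blast+

lemma HnI_memI:
  assumes "g \<in> extensional I" "\<And>i. i \<in> I \<Longrightarrow> g i \<in> carrier (Hn n)"
    "\<And>i. i \<in> I \<Longrightarrow> chi n (g i) = c"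
  shows "g \<in> carrier (HnI n I)"
  using assms unfolding mem_HnI_iff PiE_iff by simp

lemma HnI_mult_apply: "i \<in> I \<Longrightarrow> (g \<otimes>\<^bsub>HnI n I\<^esub> h) i = g i \<otimes>\<^bsub>Hn n\<^esub> h i"
  by (simp add: HnI_def)

lemma HnI_one: "\<one>\<^bsub>HnI n I\<^esub> = (\<lambda>i\<in>I. (\<lambda>_. False, id))"
  by (simp add: HnI_def)

lemma HnI_inv:
  assumes "g \<in> carrier (HnI n I)"
  shows "inv\<^bsub>HnI n I\<^esub> g = (\<lambda>i\<in>I. inv\<^bsub>Hn n\<^esub> g i)"
proof -
  interpret P: group "product_group I (\<lambda>_. Hn n)" by (simp add: group_Hn)
  have "g \<in> equal_chi n I" using assms by (simp add: HnI_eq_product_group)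
  then have "inv\<^bsub>HnI n I\<^esub> g = inv\<^bsub>product_group I (\<lambda>_. Hn n)\<^esub> g"
    unfolding HnI_eq_product_group by (rule P.m_inv_consistent[OF subgroup_equal_chi])
  also have "\<dots> = (\<lambda>i\<in>I. inv\<^bsub>Hn n\<^esub> g i)"
    using assms by (simp add: mem_HnI_iff group_Hn)
  finally show ?thesis .
qed

lemma group_hom_HnI_restrict:
  assumes "J \<subseteq> I"
  shows "group_hom (HnI n I) (HnI n J) (\<lambda>g. restrict g J)"
proof -
  have "(\<lambda>g. restrict g J) \<in> hom (HnI n I) (HnI n J)"
  proof (rule homI)
    fix g assume "g \<in> carrier (HnI n I)"
    then show "restrict g J \<in> carrier (HnI n J)"
      using assms unfolding mem_HnI_iff by (auto simp: PiE_iff)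
  next
    fix g h assume "g \<in> carrier (HnI n I)" "h \<in> carrier (HnI n I)"
    show "restrict (g \<otimes>\<^bsub>HnI n I\<^esub> h) J = restrict g J \<otimes>\<^bsub>HnI n J\<^esub> restrict h J"
      using assms by (auto simp: HnI_def fun_eq_iff simp del: Hn_mult_Pair)
  qed
  then show ?thesis by (simp add: group_hom_def group_hom_axioms_def group_HnI)
qed

lemma HnI_restrict_surj:
  assumes "J \<subseteq> I" "j0 \<in> J"
  shows "(\<lambda>g. restrict g J) ` carrier (HnI n I) = carrier (HnI n J)"
proof
  show "(\<lambda>g. restrict g J) ` carrier (HnI n I) \<subseteq> carrier (HnI n J)"
    using group_hom.hom_closed[OF group_hom_HnI_restrict[OF assms(1)]] by blast
next
  show "carrier (HnI n J) \<subseteq> (\<lambda>g. restrict g J) ` carrier (HnI n I)"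
  proof
    fix b assume b: "b \<in> carrier (HnI n J)"
    let ?g = "\<lambda>i\<in>I. if i \<in> J then b i else b j0"
    have gI: "?g \<in> carrier (HnI n I)"
    proof (rule HnI_memI)
      show "?g i \<in> carrier (Hn n)" if "i \<in> I" for i
        using HnI_memD(2)[OF b] assms(2) that by simp
      show "chi n (?g i) = chi n (b j0)" if "i \<in> I" for i
        using HnI_memD(3)[OF b _ assms(2), of i] that by simp
    qed simp
    have "restrict ?g J = b"
      by (rule extensionalityI[OF restrict_extensional HnI_memD(1)[OF b]]) (use assms(1) in auto)
    from image_eqI[where f = "\<lambda>g. restrict g J", OF sym[OF this] gI] show "b \<in> (\<lambda>g. restrict g J) ` carrier (HnI n I)" .
  qed
qed

subsection \<open>Homomorphisms to \<open>F\<^sub>2\<close>\<close>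

text \<open>A homomorphism to \<open>F\<^sub>2\<close> is encoded as a predicate, \<open>True\<close> standing for the nonzero element.\<close>

definition F2_hom :: "('g, 'b) monoid_scheme \<Rightarrow> ('g \<Rightarrow> bool) \<Rightarrow> bool" where
  "F2_hom G \<phi> \<longleftrightarrow> (\<forall>x\<in>carrier G. \<forall>y\<in>carrier G. \<phi> (x \<otimes>\<^bsub>G\<^esub> y) \<longleftrightarrow> \<phi> x \<noteq> \<phi> y)"

definition escapes_F2_kernels :: "'g set \<Rightarrow> ('g, 'b) monoid_scheme \<Rightarrow> bool" where
  "escapes_F2_kernels H G \<longleftrightarrow> (\<forall>\<phi>. F2_hom G \<phi> \<longrightarrow> (\<exists>g\<in>carrier G. \<phi> g) \<longrightarrow> (\<exists>h\<in>H. \<phi> h))"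

context group
begin

lemma F2_hom_one:
  assumes "F2_hom G \<phi>"
  shows "\<not> \<phi> \<one>"
proof -
  have "\<phi> (\<one> \<otimes> \<one>) \<longleftrightarrow> \<phi> \<one> \<noteq> \<phi> \<one>"
    using assms unfolding F2_hom_def by blast
  then show ?thesis by simp
qed

lemma F2_hom_inv:
  assumes "F2_hom G \<phi>" "x \<in> carrier G"
  shows "\<phi> (inv x) \<longleftrightarrow> \<phi> x"
proof -
  have "\<phi> (x \<otimes> inv x) \<longleftrightarrow> \<phi> x \<noteq> \<phi> (inv x)"
    using assms unfolding F2_hom_def by blast
  with F2_hom_one[OF assms(1)] r_inv[OF assms(2)] show ?thesis by auto
qed

lemma max_normal_F2_kernel:
  assumes \<phi>: "F2_hom G \<phi>" and g: "g \<in> carrier G" "\<phi> g"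
  shows "max_normal {x \<in> carrier G. \<not> \<phi> x} G"
proof -
  let ?K = "{x \<in> carrier G. \<not> \<phi> x}"
  have \<phi>_mult: "\<And>x y. x \<in> carrier G \<Longrightarrow> y \<in> carrier G \<Longrightarrow> \<phi> (x \<otimes> y) \<longleftrightarrow> \<phi> x \<noteq> \<phi> y"
    using \<phi> by (simp add: F2_hom_def)
  have "subgroup ?K G"
    by (rule subgroupI) (auto simp: \<phi>_mult F2_hom_inv[OF \<phi>] F2_hom_one[OF \<phi>])
  then have normal: "?K \<lhd> G"
    unfolding normal_inv_iff by (auto simp: \<phi>_mult F2_hom_inv[OF \<phi>])
  have "K = carrier G" if K: "K \<lhd> G" "?K \<subseteq> K" and k: "k \<in> K" "\<phi> k" for K k
  proof -
    interpret K: subgroup K G using K(1) normal_imp_subgroup by blast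
    have kc: "k \<in> carrier G" using k(1) K.subset by blast
    have "x \<in> K" if x: "x \<in> carrier G" "\<phi> x" for x
    proof -
      have "\<not> \<phi> (inv k \<otimes> x)"
        using \<phi>_mult[OF inv_closed[OF kc] x(1)] F2_hom_inv[OF \<phi> kc] k(2) x(2) by blast
      moreover have "inv k \<otimes> x \<in> carrier G" using kc x(1) by simp
      ultimately have "inv k \<otimes> x \<in> K" by (intro subsetD[OF K(2)] CollectI conjI)
      then have "k \<otimes> (inv k \<otimes> x) \<in> K" using k(1) by (rule K.m_closed[rotated])
      also have "k \<otimes> (inv k \<otimes> x) = x" using x(1) kc by (simp only: m_assoc[symmetric] r_inv l_one inv_closed)
      finally show ?thesis .
    qed
    then have "carrier G \<subseteq> K" using K(2) by blast
    with K.subset show ?thesis by blast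
  qed
  moreover have "K = ?K" if "K \<lhd> G" "?K \<subseteq> K" "\<forall>k\<in>K. \<not> \<phi> k" for K
    using that normal_imp_subgroup[OF that(1)] subgroup.subset by blast
  moreover have "?K \<noteq> carrier G" using g by blast
  ultimately show ?thesis
    using normal unfolding max_normal_def by blast
qed

lemma escapes_F2_kernels_if_supplements_Mgrp:
  assumes "subgroup H G" and "H <#> Mgrp G = carrier G"
  shows "escapes_F2_kernels H G"
  unfolding escapes_F2_kernels_def
proof (intro allI impI, rule ccontr)
  fix \<phi> assume \<phi>: "F2_hom G \<phi>" and "\<exists>g\<in>carrier G. \<phi> g" and H: "\<not> (\<exists>h\<in>H. \<phi> h)"
  then obtain g where g: "g \<in> carrier G" "\<phi> g" by blast
  let ?K = "{x \<in> carrier G. \<not> \<phi> x}"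
  interpret K: subgroup ?K G
    using max_normal_F2_kernel[OF \<phi> g] normal_imp_subgroup by (auto simp: max_normal_def)
  have HK: "H \<subseteq> ?K" using H subgroup.subset[OF assms(1)] by blast
  have MK: "Mgrp G \<subseteq> ?K" using max_normal_F2_kernel[OF \<phi> g] unfolding Mgrp_def by blast
  have "H <#> Mgrp G \<subseteq> ?K"
  proof
    fix z assume "z \<in> H <#> Mgrp G"
    then obtain h m where "h \<in> H" "m \<in> Mgrp G" "z = h \<otimes> m" unfolding set_mult_def by blast
    then show "z \<in> ?K" using K.m_closed[of h m] HK MK by blast
  qed
  with g assms(2) show False by blast
qed

end

lemma escapes_F2_kernels_image:
  assumes f: "group_hom G G' f" "f ` carrier G = carrier G'" and H: "escapes_F2_kernels H G"
  shows "escapes_F2_kernels (f ` H) G'"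
  unfolding escapes_F2_kernels_def
proof (intro allI impI)
  interpret group_hom G G' f by (rule f(1))
  fix \<phi> assume \<phi>: "F2_hom G' \<phi>" and "\<exists>g'\<in>carrier G'. \<phi> g'"
  then obtain g' where "g' \<in> f ` carrier G" "\<phi> g'" using f(2) by blast
  then obtain g where "g \<in> carrier G" "\<phi> (f g)" by blast
  moreover have "F2_hom G (\<phi> \<circ> f)"
    using \<phi> by (simp add: F2_hom_def)
  ultimately obtain h where "h \<in> H" "\<phi> (f h)"
    using H unfolding escapes_F2_kernels_def by fastforce
  then show "\<exists>h'\<in>f ` H. \<phi> h'" by blast
qed

text \<open>If \<open>f\<close> maps \<open>H\<close> onto \<open>G'\<close> and \<open>\<sigma>\<close> vanishes on \<open>H \<inter> ker f\<close>, then \<open>\<sigma>\<close> restricted to \<open>H\<close>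
  factors through \<open>f\<close> as some \<open>F \<circ> f\<close>; the homomorphism \<open>\<sigma> + F \<circ> f\<close> vanishes on \<open>H\<close>, hence everywhere,
  and so \<open>\<sigma>\<close> vanishes on all of \<open>ker f\<close>.\<close>

lemma F2_hom_vanishes_on_kernel:
  assumes f: "group_hom G G' f" and H: "subgroup H G" "f ` H = carrier G'" "escapes_F2_kernels H G"
    and \<sigma>: "F2_hom G \<sigma>" "\<forall>k\<in>H. f k = \<one>\<^bsub>G'\<^esub> \<longrightarrow> \<not> \<sigma> k"
    and g: "g \<in> carrier G" "f g = \<one>\<^bsub>G'\<^esub>"
  shows "\<not> \<sigma> g"
proof -
  interpret group_hom G G' f by (rule f)
  interpret H: subgroup H G by (rule H(1))
  have \<sigma>_mult: "\<And>x y. x \<in> carrier G \<Longrightarrow> y \<in> carrier G \<Longrightarrow> \<sigma> (x \<otimes>\<^bsub>G\<^esub> y) \<longleftrightarrow> \<sigma> x \<noteq> \<sigma> y"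
    using \<sigma>(1) unfolding F2_hom_def by blast
  define F where "F b \<longleftrightarrow> (\<exists>k\<in>H. f k = b \<and> \<sigma> k)" for b
  have F_f: "F (f k) \<longleftrightarrow> \<sigma> k" if k: "k \<in> H" for k
  proof -
    have "\<sigma> k' \<longleftrightarrow> \<sigma> k" if k': "k' \<in> H" "f k' = f k" for k'
    proof -
      have kc: "k \<in> carrier G" "k' \<in> carrier G" using k k'(1) H.subset by blast+
      have "inv\<^bsub>G\<^esub> k \<otimes>\<^bsub>G\<^esub> k' \<in> H" using k k'(1) by (intro H.m_closed H.m_inv_closed)
      moreover have "f (inv\<^bsub>G\<^esub> k \<otimes>\<^bsub>G\<^esub> k') = \<one>\<^bsub>G'\<^esub>" using kc k'(2) by simp
      ultimately have "\<not> \<sigma> (inv\<^bsub>G\<^esub> k \<otimes>\<^bsub>G\<^esub> k')" using \<sigma>(2) by blast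
      then show ?thesis
        using \<sigma>_mult[OF G.inv_closed[OF kc(1)] kc(2)] G.F2_hom_inv[OF \<sigma>(1) kc(1)] by blast
    qed
    with k show ?thesis unfolding F_def by blast
  qed
  define \<psi> where "\<psi> x \<longleftrightarrow> \<sigma> x \<noteq> F (f x)" for x
  have "F2_hom G \<psi>"
    unfolding F2_hom_def
  proof (intro ballI)
    fix x y assume x: "x \<in> carrier G" and y: "y \<in> carrier G"
    have "f x \<in> f ` H" "f y \<in> f ` H" using x y H(2) by simp_all
    then obtain kx ky where k: "kx \<in> H" "f kx = f x" "ky \<in> H" "f ky = f y"
      by (metis imageE)
    have kc: "kx \<in> carrier G" "ky \<in> carrier G" using k H.subset by blast+
    have "F (f (x \<otimes>\<^bsub>G\<^esub> y)) = F (f (kx \<otimes>\<^bsub>G\<^esub> ky))"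
      using x y kc k by simp
    also have "\<dots> \<longleftrightarrow> \<sigma> kx \<noteq> \<sigma> ky"
      using F_f[OF H.m_closed[OF k(1) k(3)]] \<sigma>_mult[OF kc] by blast
    also have "\<dots> \<longleftrightarrow> F (f x) \<noteq> F (f y)"
      using k F_f by metis
    finally show "\<psi> (x \<otimes>\<^bsub>G\<^esub> y) \<longleftrightarrow> \<psi> x \<noteq> \<psi> y"
      unfolding \<psi>_def using \<sigma>_mult[OF x y] by blast
  qed
  moreover have "\<not> \<psi> k" if "k \<in> H" for k
    using that F_f unfolding \<psi>_def by blast
  ultimately have "\<not> \<psi> g"
    using H(3) g(1) unfolding escapes_F2_kernels_def by blast
  moreover have "\<not> F \<one>\<^bsub>G'\<^esub>"
    using F_f[OF H.one_closed] G.F2_hom_one[OF \<sigma>(1)] by simp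
  ultimately show ?thesis unfolding \<psi>_def using g(2) by simp
qed

subsection \<open>Normal subgroups of the symmetric group\<close>

lemma permutes_conj_transpose:
  assumes "p permutes S"
  shows "p \<circ> Transposition.transpose a b \<circ> perm_inv p = Transposition.transpose (p a) (p b)"
proof -
  have "Transposition.transpose (p a) (p b) \<circ> p = p \<circ> Transposition.transpose a b"
    using transpose_comp_eq[of p "p a" "p b"] permutes_bij[OF assms] by (simp add: bij_is_inj)
  then show ?thesis by (metis comp_assoc comp_id permutes_inv_o(1)[OF assms])
qed

lemma permutes_map_two:
  assumes "c < n" "d < n" "c \<noteq> d" "a < n" "b < n" "a \<noteq> b"
  obtains t where "t permutes {..<n}" "t c = a" "t d = b"
proof
  let ?d' = "Transposition.transpose c a d"
  let ?t = "Transposition.transpose ?d' b \<circ> Transposition.transpose c a"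
  have "?d' < n" "?d' \<noteq> a" using assms by (auto simp: Transposition.transpose_def)
  then show "?t permutes {..<n}" "?t c = a" "?t d = b"
    using assms by (auto intro!: permutes_compose permutes_swap_id)
qed

locale normal_perm_set =
  fixes n :: nat and P :: "(nat \<Rightarrow> nat) set"
  assumes permutes: "p \<in> P \<Longrightarrow> p permutes {..<n}"
    and comp_closed: "p \<in> P \<Longrightarrow> q \<in> P \<Longrightarrow> p \<circ> q \<in> P"
    and inv_closed: "p \<in> P \<Longrightarrow> perm_inv p \<in> P"
    and conj_closed: "p \<in> P \<Longrightarrow> t permutes {..<n} \<Longrightarrow> t \<circ> p \<circ> perm_inv t \<in> P"
begin

lemma moved_less: "p \<in> P \<Longrightarrow> p x \<noteq> x \<Longrightarrow> x < n"
  using permutes permutes_not_in lessThan_iff by metis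

lemma finite_moved: "p \<in> P \<Longrightarrow> finite {x. p x \<noteq> x}"
  by (rule finite_subset[of _ "{..<n}"]) (auto dest: moved_less)

lemma transpose_commutator_mem:
  assumes "s \<in> P" "a < n" "b < n"
  shows "Transposition.transpose (s a) (s b) \<circ> Transposition.transpose a b \<in> P"
proof -
  have "Transposition.transpose a b \<circ> perm_inv s \<circ> Transposition.transpose a b \<in> P"
    using conj_closed[OF inv_closed[OF assms(1)], of "Transposition.transpose a b"] assms(2,3)
    by (simp add: permutes_swap_id)
  from comp_closed[OF assms(1) this] show ?thesis
    using permutes_conj_transpose[OF permutes[OF assms(1)]] by (simp add: o_assoc)
qed

lemma odd_mem_shorten:
  assumes s: "s \<in> P" "\<not> evenperm s" and w: "w \<in> P" "evenperm w" "{x. w x \<noteq> x} \<subseteq> {x. s x \<noteq> x}"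
    and y: "s y \<noteq> y" "s (w y) = y"
  shows "s \<circ> w \<in> P" "\<not> evenperm (s \<circ> w)" "card {x. (s \<circ> w) x \<noteq> x} < card {x. s x \<noteq> x}"
proof -
  show "s \<circ> w \<in> P" using comp_closed[OF s(1) w(1)] .
  have "permutation s" "permutation w"
    using permutes_imp_permutation[OF finite_lessThan permutes] s(1) w(1) by auto
  then show "\<not> evenperm (s \<circ> w)"
    using s(2) w(2) by (simp add: evenperm_comp)
  have "{x. (s \<circ> w) x \<noteq> x} \<subseteq> {x. s x \<noteq> x} - {y}"
  proof
    fix x assume x: "x \<in> {x. (s \<circ> w) x \<noteq> x}"
    have "w x = x" if "s x = x" using w(3) that by blast
    with x y(2) show "x \<in> {x. s x \<noteq> x} - {y}" by auto
  qed
  then show "card {x. (s \<circ> w) x \<noteq> x} < card {x. s x \<noteq> x}"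
    using y(1) by (intro psubset_card_mono[OF finite_moved[OF s(1)]]) blast
qed

lemma id_mem: "s \<in> P \<Longrightarrow> id \<in> P"
  using comp_closed[OF _ inv_closed] permutes_inv_o(1)[OF permutes] by metis

lemma three_point_witness:
  assumes s: "s \<in> P" and a: "s a \<noteq> a" "s (s a) \<noteq> a"
  obtains w where "w \<in> P" "evenperm w" "{x. w x \<noteq> x} \<subseteq> {x. s x \<noteq> x}" "s (w (s a)) = s a"
proof
  let ?b = "s a" and ?c = "s (s a)"
  let ?w = "Transposition.transpose ?b ?c \<circ> Transposition.transpose a ?b"
  have inj: "s x = s y \<longleftrightarrow> x = y" for x y
    using permutes_inj[OF permutes[OF s]] by (meson injD)
  have moved: "s ?b \<noteq> ?b" "s ?c \<noteq> ?c" using a inj by metis+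
  show "?w \<in> P"
    using transpose_commutator_mem[OF s, of a ?b] moved_less[OF s] a moved by simp
  show "evenperm ?w"
    using a moved by (simp add: evenperm_comp permutation_swap_id evenperm_swap)
  show "{x. ?w x \<noteq> x} \<subseteq> {x. s x \<noteq> x}"
    using a moved by (auto simp: Transposition.transpose_def split: if_splits)
  show "s (?w ?b) = ?b"
    using a by simp
qed

lemma four_point_witness:
  assumes s: "s \<in> P" and ab: "s a = b" "s b = a" and cd: "s c = d" "s d = c"
    and distinct: "distinct [a, b, c, d]"
  obtains w where "w \<in> P" "evenperm w" "{x. w x \<noteq> x} \<subseteq> {x. s x \<noteq> x}" "s (w a) = a"
proof
  let ?w = "Transposition.transpose a b \<circ> Transposition.transpose c d"
  have less: "a < n" "b < n" "c < n" "d < n"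
    using moved_less[OF s] ab cd distinct by auto
  have bdac: "Transposition.transpose b d \<circ> Transposition.transpose a c \<in> P"
    using transpose_commutator_mem[OF s less(1,3)] ab cd by simp
  have "Transposition.transpose a b \<circ> (Transposition.transpose b d \<circ> Transposition.transpose a c)
      \<circ> perm_inv (Transposition.transpose a b) \<in> P"
    using conj_closed[OF bdac, of "Transposition.transpose a b"] less by (simp add: permutes_swap_id)
  also have "Transposition.transpose a b \<circ> (Transposition.transpose b d \<circ> Transposition.transpose a c)
      \<circ> perm_inv (Transposition.transpose a b) = Transposition.transpose a d \<circ> Transposition.transpose b c"
    using distinct by (auto simp: fun_eq_iff Transposition.transpose_def)
  finally have "(Transposition.transpose b d \<circ> Transposition.transpose a c)
      \<circ> (Transposition.transpose a d \<circ> Transposition.transpose b c) \<in> P"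
    by (rule comp_closed[OF bdac])
  also have "(Transposition.transpose b d \<circ> Transposition.transpose a c)
      \<circ> (Transposition.transpose a d \<circ> Transposition.transpose b c) = ?w"
    using distinct by (auto simp: fun_eq_iff Transposition.transpose_def)
  finally show "?w \<in> P" .
  show "evenperm ?w"
    using distinct by (simp add: evenperm_comp permutation_swap_id evenperm_swap)
  show "{x. ?w x \<noteq> x} \<subseteq> {x. s x \<noteq> x}"
    using ab cd distinct by (auto simp: Transposition.transpose_def split: if_splits)
  show "s (?w a) = a"
    using ab distinct by simp
qed

text \<open>Descent on the support of an odd element of \<open>P\<close>: multiplying by a suitable even element of
  \<open>P\<close> fixes one more point, until a transposition remains.\<close>

lemma transposition_mem_if_odd:
  assumes "s \<in> P" "\<not> evenperm s"
  shows "\<exists>a b. a \<noteq> b \<and> Transposition.transpose a b \<in> P"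
  using assms
proof (induction "card {x. s x \<noteq> x}" arbitrary: s rule: less_induct)
  case less
  note s = less.prems
  have inj: "s x = s y \<longleftrightarrow> x = y" for x y
    using permutes_inj[OF permutes[OF s(1)]] by (meson injD)
  have shorten: "\<exists>a b. a \<noteq> b \<and> Transposition.transpose a b \<in> P"
    if "w \<in> P" "evenperm w" "{x. w x \<noteq> x} \<subseteq> {x. s x \<noteq> x}" "s y \<noteq> y" "s (w y) = y" for w y
    using less.hyps odd_mem_shorten[OF s that] by blast
  consider (three) a where "s a \<noteq> a" "s (s a) \<noteq> a" | (involution) "\<And>a. s (s a) = a"
    by metis
  then show ?case
  proof cases
    case (three a)
    then obtain w where "w \<in> P" "evenperm w" "{x. w x \<noteq> x} \<subseteq> {x. s x \<noteq> x}" "s (w (s a)) = s a"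
      using three_point_witness[OF s(1)] by blast
    moreover have "s (s a) \<noteq> s a" using three(1) inj by simp
    ultimately show ?thesis using shorten by blast
  next
    case involution
    obtain a where a: "s a \<noteq> a" using s(2) by (metis eq_id_iff evenperm_id)
    show ?thesis
    proof (cases "{x. s x \<noteq> x} \<subseteq> {a, s a}")
      case True
      then have "s = Transposition.transpose a (s a)"
        using involution by (auto simp: fun_eq_iff Transposition.transpose_def)
      with a s(1) show ?thesis by metis
    next
      case False
      then obtain c where c: "s c \<noteq> c" "c \<noteq> a" "c \<noteq> s a" by blast
      have "distinct [a, s a, c, s c]"
        using a c involution inj by (metis distinct_length_2_or_more distinct_singleton)
      then obtain w where "w \<in> P" "evenperm w" "{x. w x \<noteq> x} \<subseteq> {x. s x \<noteq> x}" "s (w a) = a"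
        using four_point_witness[OF s(1) refl involution refl involution] by blast
      then show ?thesis using a shorten by blast
    qed
  qed
qed

lemma transpose_mem_if_odd:
  assumes s: "s \<in> P" "\<not> evenperm s" and cd: "c < n" "d < n"
  shows "Transposition.transpose c d \<in> P"
proof (cases "c = d")
  case True
  then show ?thesis using id_mem[OF s(1)] by simp
next
  case False
  obtain a b where ab: "a \<noteq> b" "Transposition.transpose a b \<in> P"
    using transposition_mem_if_odd[OF s] by blast
  then have "a < n" "b < n" using moved_less[OF ab(2)] by auto
  then obtain t where "t permutes {..<n}" "t a = c" "t b = d"
    using permutes_map_two[OF _ _ ab(1) cd False] by blast
  then show ?thesis
    using conj_closed[OF ab(2)] permutes_conj_transpose by metis
qed

theorem permutes_mem_if_odd:
  assumes s: "s \<in> P" "\<not> evenperm s" and q: "q permutes {..<n}"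
  shows "q \<in> P"
  using q finite_lessThan[of n]
proof (induction rule: permutes_induct)
  case id
  then show ?case using id_mem[OF s(1)] .
next
  case (swap c d p)
  then show ?case
    using comp_closed[OF transpose_mem_if_odd[OF s] swap.IH] by (simp add: comp_def)
qed

end

subsection \<open>Normal subgroups of the hyperoctahedral group\<close>

context
  fixes N and n :: nat
  assumes N: "N \<lhd> Hn n"
begin

interpretation Hn: group "Hn n" by (rule group_Hn)
interpretation N: normal N "Hn n" by (rule N)

lemma Hn_normal_flip_pair:
  assumes xs: "(x, s) \<in> N" and c: "s c \<noteq> c"
  shows "((\<lambda>i. i \<in> {c, s c}), id) \<in> N"
proof -
  have xs': "(x, s) \<in> carrier (Hn n)" and s: "s permutes {..<n}"
    using xs N.subset by (auto simp: mem_Hn_iff)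
  let ?v = "\<lambda>i. i = c"
  have v: "(?v, id) \<in> carrier (Hn n)"
    using c permutes_not_in[OF s] by (auto simp: mem_Hn_iff)
  have inv_s: "perm_inv s i = c \<longleftrightarrow> i = s c" for i
    using permutes_inverses[OF s] by metis
  have "(?v, id) \<otimes>\<^bsub>Hn n\<^esub> (x, s) \<otimes>\<^bsub>Hn n\<^esub> inv\<^bsub>Hn n\<^esub> (?v, id) \<otimes>\<^bsub>Hn n\<^esub> inv\<^bsub>Hn n\<^esub> (x, s)
      = ((\<lambda>i. i \<in> {c, s c}), id)"
    using Hn_inv_Pair[OF v] Hn_inv_Pair[OF xs'] c
    by (auto simp: permutes_inverses(1)[OF s] permutes_inv_o(1)[OF s] inv_s fun_eq_iff)
  moreover have "(?v, id) \<otimes>\<^bsub>Hn n\<^esub> (x, s) \<otimes>\<^bsub>Hn n\<^esub> inv\<^bsub>Hn n\<^esub> (?v, id) \<otimes>\<^bsub>Hn n\<^esub> inv\<^bsub>Hn n\<^esub> (x, s) \<in> N"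
    using N.inv_op_closed2[OF v xs] xs by blast
  ultimately show ?thesis by simp
qed

lemma Hn_normal_flip_pairs:
  assumes cd: "((\<lambda>i. i \<in> {c, d}), id) \<in> N" "c < n" "d < n" "c \<noteq> d"
    and ab: "a < n" "b < n" "a \<noteq> b"
  shows "((\<lambda>i. i \<in> {a, b}), id) \<in> N"
proof -
  obtain t where t: "t permutes {..<n}" "t c = a" "t d = b"
    using permutes_map_two[OF cd(2-4) ab] by blast
  have tc: "(\<lambda>_. False, t) \<in> carrier (Hn n)" using t(1) by (simp add: mem_Hn_iff)
  have inv_t: "perm_inv t i = c \<longleftrightarrow> i = a" "perm_inv t i = d \<longleftrightarrow> i = b" for i
    using permutes_inverses[OF t(1)] t(2,3) by metis+
  have "(\<lambda>_. False, t) \<otimes>\<^bsub>Hn n\<^esub> ((\<lambda>i. i \<in> {c, d}), id) \<otimes>\<^bsub>Hn n\<^esub> inv\<^bsub>Hn n\<^esub> (\<lambda>_. False, t)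
      = ((\<lambda>i. i \<in> {a, b}), id)"
    using Hn_inv_Pair[OF tc] by (auto simp: permutes_inverses(1)[OF t(1)] inv_t fun_eq_iff)
  with N.inv_op_closed2[OF tc cd(1)] show ?thesis by simp
qed

lemma Hn_normal_even_flips:
  assumes pairs: "\<And>a b. a < n \<Longrightarrow> b < n \<Longrightarrow> a \<noteq> b \<Longrightarrow> ((\<lambda>i. i \<in> {a, b}), id) \<in> N"
    and A: "A \<subseteq> {..<n}" "card A = 2 * k"
  shows "((\<lambda>i. i \<in> A), id) \<in> N"
  using A
proof (induction k arbitrary: A)
  case 0
  then have "finite A" using finite_subset by blast
  with 0 have "((\<lambda>i. i \<in> A), id) = \<one>\<^bsub>Hn n\<^esub>" by simp
  then show ?case using N.one_closed by (simp only:)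
next
  case (Suc k)
  have "card A = Suc (Suc (2 * k))" using Suc.prems(2) by simp
  from card_eq_SucD[OF this] obtain a A' where a: "A = insert a A'" "a \<notin> A'" "card A' = Suc (2 * k)"
    by blast
  from card_eq_SucD[OF a(3)] obtain b where "b \<in> A'" by blast
  with a have ab: "a \<in> A" "b \<in> A" "a \<noteq> b" by auto
  let ?A' = "A - {a, b}"
  have "finite A" using Suc.prems(1) finite_subset by blast
  then have "card ?A' = 2 * k" using Suc.prems(2) ab by (simp add: card_Diff_subset)
  then have "((\<lambda>i. i \<in> ?A'), id) \<in> N" using Suc.IH[of ?A'] Suc.prems(1) by blast
  moreover have "((\<lambda>i. i \<in> {a, b}), id) \<in> N" using ab pairs Suc.prems(1) by blast
  ultimately have "((\<lambda>i. i \<in> ?A'), id) \<otimes>\<^bsub>Hn n\<^esub> ((\<lambda>i. i \<in> {a, b}), id) \<in> N"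
    by (rule N.m_closed)
  moreover have "((\<lambda>i. i \<in> ?A'), id) \<otimes>\<^bsub>Hn n\<^esub> ((\<lambda>i. i \<in> {a, b}), id) = ((\<lambda>i. i \<in> A), id)"
    using ab by auto
  ultimately show ?case by (simp only:)
qed

lemma normal_perm_set_snd: "normal_perm_set n (snd ` N)"
proof
  fix p assume "p \<in> snd ` N"
  then show "p permutes {..<n}" using N.subset permutes_snd_Hn by blast
next
  fix p q assume "p \<in> snd ` N" "q \<in> snd ` N"
  then obtain a b where "a \<in> N" "b \<in> N" "p = snd a" "q = snd b" by blast
  then show "p \<circ> q \<in> snd ` N" using N.m_closed[of a b] snd_Hn_mult[where a=a and b=b] by (metis image_eqI)
next
  fix p assume "p \<in> snd ` N"
  then obtain a where "a \<in> N" "p = snd a" by blast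
  moreover have "snd (inv\<^bsub>Hn n\<^esub> a) = perm_inv (snd a)"
    using \<open>a \<in> N\<close> N.subset snd_Hn_inv by blast
  ultimately show "perm_inv p \<in> snd ` N" using N.m_inv_closed by (metis image_eqI)
next
  fix p t assume "p \<in> snd ` N" and t: "t permutes {..<n}"
  then obtain a where a: "a \<in> N" "p = snd a" by blast
  have tc: "(\<lambda>_. False, t) \<in> carrier (Hn n)" using t by (simp add: mem_Hn_iff)
  have "snd ((\<lambda>_. False, t) \<otimes>\<^bsub>Hn n\<^esub> a \<otimes>\<^bsub>Hn n\<^esub> inv\<^bsub>Hn n\<^esub> (\<lambda>_. False, t)) = t \<circ> p \<circ> perm_inv t"
    using a(2) snd_Hn_inv[OF tc] by (simp add: snd_Hn_mult)
  then show "t \<circ> p \<circ> perm_inv t \<in> snd ` N"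
    using N.inv_op_closed2[OF tc a(1)] by (metis image_eqI)
qed

theorem Hn_normal_contains_chi_kernel:
  assumes chi: "\<forall>a\<in>N. chi n a" and odd: "a0 \<in> N" "\<not> evenperm (snd a0)"
  shows "{a \<in> carrier (Hn n). chi n a} \<subseteq> N"
proof
  fix a assume a: "a \<in> {a \<in> carrier (Hn n). chi n a}"
  obtain c where c: "snd a0 c \<noteq> c" using odd(2) by (metis eq_id_iff evenperm_id)
  have "a0 \<in> carrier (Hn n)" using odd(1) N.subset by blast
  then have cn: "c < n" "snd a0 c < n"
    using c permutes_snd_Hn permutes_not_in permutes_in_image by (metis lessThan_iff not_less)+
  have pair0: "((\<lambda>i. i \<in> {c, snd a0 c}), id) \<in> N"
    using Hn_normal_flip_pair[of "fst a0" "snd a0" c] odd(1) c by simp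
  have pairs: "((\<lambda>i. i \<in> {p, q}), id) \<in> N" if "p < n" "q < n" "p \<noteq> q" for p q
    by (rule Hn_normal_flip_pairs[OF pair0 cn]) (use c that in auto)
  have vectors: "(x, id) \<in> N" if x: "(x, id) \<in> carrier (Hn n)" "chi n (x, id)" for x
  proof -
    let ?A = "{i. i < n \<and> x i}"
    obtain k where "card ?A = 2 * k" using x(2) by (auto simp: chi_def)
    then have "((\<lambda>i. i \<in> ?A), id) \<in> N"
      by (intro Hn_normal_even_flips[OF pairs]) auto
    moreover have "(\<lambda>i. i \<in> ?A) = x" using x(1) by (auto simp: mem_Hn_iff fun_eq_iff not_le)
    ultimately show ?thesis by simp
  qed
  have "snd a \<in> snd ` N"
    using normal_perm_set.permutes_mem_if_odd[OF normal_perm_set_snd imageI[OF odd(1)] odd(2)]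
      a permutes_snd_Hn by blast
  then obtain b where b: "b \<in> N" "snd b = snd a" by force
  have bc: "b \<in> carrier (Hn n)" using b(1) N.subset by blast
  let ?w = "a \<otimes>\<^bsub>Hn n\<^esub> inv\<^bsub>Hn n\<^esub> b"
  have "?w \<in> carrier (Hn n)" using a bc by simp
  moreover have "chi n ?w" using a bc chi b(1) by (simp add: chi_mult chi_inv)
  moreover have "snd ?w = id"
    using b(2) bc permutes_inv_o(1)[OF permutes_snd_Hn[OF bc]] by (simp add: snd_Hn_mult snd_Hn_inv)
  ultimately have "?w \<in> N" using vectors by (metis prod.collapse)
  then have "?w \<otimes>\<^bsub>Hn n\<^esub> b \<in> N" using b(1) by blast
  moreover have ac: "a \<in> carrier (Hn n)" using a by blast
  then have "?w \<otimes>\<^bsub>Hn n\<^esub> b = a"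
    by (simp only: Hn.m_assoc[OF ac Hn.inv_closed[OF bc] bc] Hn.l_inv[OF bc] Hn.r_one[OF ac])
  ultimately show "a \<in> N" by metis
qed

end

subsection \<open>The part of a subgroup supported in one coordinate\<close>

definition embed_at :: "'a set \<Rightarrow> 'a \<Rightarrow> (nat \<Rightarrow> bool) \<times> (nat \<Rightarrow> nat) \<Rightarrow> 'a \<Rightarrow> (nat \<Rightarrow> bool) \<times> (nat \<Rightarrow> nat)"
  where "embed_at I i a = (\<lambda>j\<in>I. if j = i then a else (\<lambda>_. False, id))"

definition fibre_at :: "nat \<Rightarrow> 'a set \<Rightarrow> 'a \<Rightarrow> ('a \<Rightarrow> (nat \<Rightarrow> bool) \<times> (nat \<Rightarrow> nat)) set
    \<Rightarrow> ((nat \<Rightarrow> bool) \<times> (nat \<Rightarrow> nat)) set"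
  where "fibre_at n I i H = {a \<in> carrier (Hn n). embed_at I i a \<in> H}"

lemma embed_at_mult: "embed_at I i a \<otimes>\<^bsub>HnI n I\<^esub> embed_at I i b = embed_at I i (a \<otimes>\<^bsub>Hn n\<^esub> b)"
  by (auto simp: HnI_def embed_at_def fun_eq_iff)

lemma embed_at_one: "embed_at I i (\<lambda>_. False, id) = \<one>\<^bsub>HnI n I\<^esub>"
  by (simp add: HnI_one embed_at_def)

lemma embed_at_mem:
  assumes "a \<in> carrier (Hn n)" "chi n a"
  shows "embed_at I i a \<in> carrier (HnI n I)"
proof (rule HnI_memI)
  show "embed_at I i a j \<in> carrier (Hn n)" if "j \<in> I" for j
    using assms(1) that by (simp add: embed_at_def mem_Hn_iff permutes_id)
  show "chi n (embed_at I i a j) = True" if "j \<in> I" for j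
    using assms(2) that by (simp add: embed_at_def)
qed (simp add: embed_at_def)

lemma HnI_inv_embed_at:
  assumes "embed_at I i a \<in> carrier (HnI n I)" "i \<in> I"
  shows "inv\<^bsub>HnI n I\<^esub> embed_at I i a = embed_at I i (inv\<^bsub>Hn n\<^esub> a)"
  using assms monoid.inv_one[OF group.is_monoid[OF group_Hn], of n]
  by (auto simp: HnI_inv embed_at_def fun_eq_iff)

lemma embed_at_restrict:
  assumes "g \<in> carrier (HnI n I)" "i \<in> I" "restrict g (I - {i}) = restrict \<one>\<^bsub>HnI n I\<^esub> (I - {i})"
  shows "g = embed_at I i (g i)"
proof (rule extensionalityI[OF HnI_memD(1)[OF assms(1)]])
  show "embed_at I i (g i) \<in> extensional I" by (simp add: embed_at_def)
  fix j assume "j \<in> I"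
  then show "g j = embed_at I i (g i) j"
    using fun_cong[OF assms(3), of j] by (cases "j = i") (auto simp: embed_at_def HnI_one)
qed

context
  fixes n :: nat and I :: "'a set" and i :: 'a and H
  assumes H: "subgroup H (HnI n I)" and i: "i \<in> I"
begin

interpretation Hn: group "Hn n" by (rule group_Hn)
interpretation H: subgroup H "HnI n I" by (rule H)

lemma normal_fibre_at:
  assumes proj: "(\<lambda>g. g i) ` H = carrier (Hn n)"
  shows "fibre_at n I i H \<lhd> Hn n"
proof -
  have emb_inv: "inv\<^bsub>HnI n I\<^esub> embed_at I i a = embed_at I i (inv\<^bsub>Hn n\<^esub> a)" if "embed_at I i a \<in> H" for a
    using HnI_inv_embed_at[OF _ i] H.subset that by blast
  have "subgroup (fibre_at n I i H) (Hn n)"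
  proof (rule Hn.subgroupI)
    show "fibre_at n I i H \<subseteq> carrier (Hn n)" by (auto simp: fibre_at_def)
    have "(\<lambda>_. False, id) \<in> fibre_at n I i H"
      using embed_at_one[of I i n] by (simp add: fibre_at_def mem_Hn_iff permutes_id)
    then show "fibre_at n I i H \<noteq> {}" by blast
  next
    fix a b assume a: "a \<in> fibre_at n I i H" and b: "b \<in> fibre_at n I i H"
    then have "embed_at I i a \<otimes>\<^bsub>HnI n I\<^esub> embed_at I i b \<in> H"
      by (intro H.m_closed) (simp_all add: fibre_at_def)
    with a b show "a \<otimes>\<^bsub>Hn n\<^esub> b \<in> fibre_at n I i H"
      by (simp add: fibre_at_def embed_at_mult del: Hn_mult_Pair)
  next
    fix a assume a: "a \<in> fibre_at n I i H"
    then have "inv\<^bsub>HnI n I\<^esub> embed_at I i a \<in> H"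
      by (intro H.m_inv_closed) (simp add: fibre_at_def)
    with a show "inv\<^bsub>Hn n\<^esub> a \<in> fibre_at n I i H"
      by (simp add: fibre_at_def emb_inv)
  qed
  moreover have "c \<otimes>\<^bsub>Hn n\<^esub> a \<otimes>\<^bsub>Hn n\<^esub> inv\<^bsub>Hn n\<^esub> c \<in> fibre_at n I i H"
    if c: "c \<in> carrier (Hn n)" and a: "a \<in> fibre_at n I i H" for a c
  proof -
    have "c \<in> (\<lambda>g. g i) ` H" using c proj by simp
    then obtain h where h: "h \<in> H" "h i = c" by blast
    have hc: "h \<in> carrier (HnI n I)" using h(1) H.subset by blast
    have ac: "a \<in> carrier (Hn n)" "embed_at I i a \<in> H" using a by (auto simp: fibre_at_def)
    have "h \<otimes>\<^bsub>HnI n I\<^esub> embed_at I i a \<otimes>\<^bsub>HnI n I\<^esub> inv\<^bsub>HnI n I\<^esub> h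
        = embed_at I i (c \<otimes>\<^bsub>Hn n\<^esub> a \<otimes>\<^bsub>Hn n\<^esub> inv\<^bsub>Hn n\<^esub> c)"
    proof (rule ext)
      fix j
      show "(h \<otimes>\<^bsub>HnI n I\<^esub> embed_at I i a \<otimes>\<^bsub>HnI n I\<^esub> inv\<^bsub>HnI n I\<^esub> h) j
          = embed_at I i (c \<otimes>\<^bsub>Hn n\<^esub> a \<otimes>\<^bsub>Hn n\<^esub> inv\<^bsub>Hn n\<^esub> c) j"
      proof (cases "j \<in> I")
        case True
        then have "h j \<in> carrier (Hn n)" using HnI_memD(2)[OF hc] by blast
        then show ?thesis
          using True h(2) Hn.r_inv[of "h j"] Hn.r_one[of "h j"]
          by (simp add: HnI_mult_apply HnI_inv[OF hc] embed_at_def del: Hn_mult_Pair)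
      qed (simp add: HnI_def embed_at_def)
    qed
    moreover have "h \<otimes>\<^bsub>HnI n I\<^esub> embed_at I i a \<otimes>\<^bsub>HnI n I\<^esub> inv\<^bsub>HnI n I\<^esub> h \<in> H"
      using h(1) ac(2) by (intro H.m_closed H.m_inv_closed)
    ultimately show ?thesis using c ac(1) by (simp add: fibre_at_def)
  qed
  ultimately show ?thesis by (simp add: Hn.normal_inv_iff)
qed

lemma chi_fibre_at:
  assumes "j \<in> I" "j \<noteq> i" "a \<in> fibre_at n I i H"
  shows "chi n a"
proof -
  have "embed_at I i a \<in> carrier (HnI n I)" using assms(3) H.subset by (auto simp: fibre_at_def)
  from HnI_memD(3)[OF this i assms(1)] show ?thesis
    using assms(1,2) i by (simp add: embed_at_def)
qed

text \<open>If the fibre at \<open>i\<close> consisted of even permutations only, the parity of the permutation at \<open>i\<close>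
  would be an \<open>F2_hom\<close> vanishing on \<open>H \<inter> ker f\<close> for the restriction \<open>f\<close> to the other coordinates,
  but not on all of \<open>ker f\<close>.\<close>

lemma fibre_at_contains_odd:
  assumes n: "2 \<le> n" and J: "I - {i} \<noteq> {}"
    and onto: "(\<lambda>g. restrict g (I - {i})) ` H = carrier (HnI n (I - {i}))"
    and esc: "escapes_F2_kernels H (HnI n I)"
  shows "\<exists>a\<in>fibre_at n I i H. \<not> evenperm (snd a)"
proof (rule ccontr)
  assume "\<not> ?thesis"
  then have even: "\<And>a. a \<in> fibre_at n I i H \<Longrightarrow> evenperm (snd a)" by blast
  let ?J = "I - {i}"
  define \<sigma> where "\<sigma> g \<longleftrightarrow> \<not> evenperm (snd (g i))" for g :: "'a \<Rightarrow> (nat \<Rightarrow> bool) \<times> (nat \<Rightarrow> nat)"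
  have hom: "group_hom (HnI n I) (HnI n ?J) (\<lambda>g. restrict g ?J)"
    by (rule group_hom_HnI_restrict) blast
  have "F2_hom (HnI n I) \<sigma>"
    unfolding F2_hom_def
  proof (intro ballI)
    fix x y assume x: "x \<in> carrier (HnI n I)" and y: "y \<in> carrier (HnI n I)"
    have "permutation (snd (x i))" "permutation (snd (y i))"
      using HnI_memD(2)[OF x i] HnI_memD(2)[OF y i]
      by (auto intro: permutes_imp_permutation[OF finite_lessThan permutes_snd_Hn])
    then show "\<sigma> (x \<otimes>\<^bsub>HnI n I\<^esub> y) \<longleftrightarrow> \<sigma> x \<noteq> \<sigma> y"
      by (simp add: \<sigma>_def HnI_mult_apply[OF i] snd_Hn_mult evenperm_comp)
  qed
  moreover have "\<not> \<sigma> k" if k: "k \<in> H" "restrict k ?J = \<one>\<^bsub>HnI n ?J\<^esub>" for k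
  proof -
    have kc: "k \<in> carrier (HnI n I)" using k(1) H.subset by blast
    have "restrict k ?J = restrict \<one>\<^bsub>HnI n I\<^esub> ?J" using k(2) by (auto simp: HnI_one)
    then have "k = embed_at I i (k i)" by (rule embed_at_restrict[OF kc i])
    then have "k i \<in> fibre_at n I i H" using k(1) HnI_memD(2)[OF kc i] by (simp add: fibre_at_def)
    then show ?thesis using even by (simp add: \<sigma>_def)
  qed
  moreover have "embed_at I i (\<lambda>_. False, Transposition.transpose 0 1) \<in> carrier (HnI n I)"
    using n by (intro embed_at_mem) (simp_all add: mem_Hn_iff permutes_swap_id chi_def)
  moreover have "restrict (embed_at I i (\<lambda>_. False, Transposition.transpose 0 1)) ?J = \<one>\<^bsub>HnI n ?J\<^esub>"
    by (auto simp: embed_at_def HnI_one)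
  moreover have "\<sigma> (embed_at I i (\<lambda>_. False, Transposition.transpose 0 1))"
    using i by (simp add: \<sigma>_def embed_at_def evenperm_swap)
  ultimately show False
    using F2_hom_vanishes_on_kernel[OF hom H onto esc] by blast
qed

lemma eq_carrier_if_fibre_at_contains_chi_kernel:
  assumes j: "j \<in> I" "j \<noteq> i"
    and onto: "(\<lambda>g. restrict g (I - {i})) ` H = carrier (HnI n (I - {i}))"
    and fibre: "{a \<in> carrier (Hn n). chi n a} \<subseteq> fibre_at n I i H"
  shows "H = carrier (HnI n I)"
proof
  show "H \<subseteq> carrier (HnI n I)" by (rule H.subset)
  show "carrier (HnI n I) \<subseteq> H"
  proof
    fix g assume g: "g \<in> carrier (HnI n I)"
    have "restrict g (I - {i}) \<in> (\<lambda>g. restrict g (I - {i})) ` H"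
      using group_hom.hom_closed[OF group_hom_HnI_restrict[OF Diff_subset] g] onto by simp
    then obtain h where h: "h \<in> H" "restrict h (I - {i}) = restrict g (I - {i})"
      by (metis (no_types, lifting) imageE)
    have hc: "h \<in> carrier (HnI n I)" using h(1) H.subset by blast
    have hg: "h k = g k" if "k \<in> I" "k \<noteq> i" for k
      using fun_cong[OF h(2), of k] that by simp
    have gi: "h i \<in> carrier (Hn n)" "g i \<in> carrier (Hn n)"
      using HnI_memD(2)[OF hc i] HnI_memD(2)[OF g i] by blast+
    let ?c = "inv\<^bsub>Hn n\<^esub> h i \<otimes>\<^bsub>Hn n\<^esub> g i"
    have "chi n (h i) = chi n (g i)"
      using HnI_memD(3)[OF hc i j(1)] HnI_memD(3)[OF g i j(1)] hg[OF j] by simp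
    then have "chi n ?c"
      using gi by (simp add: chi_mult chi_inv del: Hn_mult_Pair)
    moreover have "?c \<in> carrier (Hn n)" using gi by simp
    ultimately have "?c \<in> fibre_at n I i H" using fibre by blast
    then have "embed_at I i ?c \<in> H" by (simp add: fibre_at_def)
    then have "h \<otimes>\<^bsub>HnI n I\<^esub> embed_at I i ?c \<in> H" using h(1) by (rule H.m_closed[rotated])
    also have "h \<otimes>\<^bsub>HnI n I\<^esub> embed_at I i ?c = g"
    proof (rule extensionalityI[OF _ HnI_memD(1)[OF g]])
      show "h \<otimes>\<^bsub>HnI n I\<^esub> embed_at I i ?c \<in> extensional I" by (simp add: HnI_def)
      fix k assume k: "k \<in> I"
      show "(h \<otimes>\<^bsub>HnI n I\<^esub> embed_at I i ?c) k = g k"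
      proof (cases "k = i")
        case True
        then show ?thesis
          using gi Hn.l_one[of "g i"]
          by (simp add: HnI_mult_apply[OF i] embed_at_def i Hn.m_assoc[symmetric] del: Hn_mult_Pair)
      next
        case False
        then show ?thesis
          using k hg[OF k False] Hn.r_one[OF HnI_memD(2)[OF hc k]]
          by (simp add: HnI_mult_apply[OF k] embed_at_def del: Hn_mult_Pair)
      qed
    qed
    finally show "g \<in> H" .
  qed
qed

end

subsection \<open>Subdirect subgroups\<close>

theorem HnI_subgroup_eq_carrier:
  assumes n: "2 \<le> n" and I: "finite I" "I \<noteq> {}"
    and H: "subgroup H (HnI n I)" "\<forall>i\<in>I. (\<lambda>g. g i) ` H = carrier (Hn n)"
      "escapes_F2_kernels H (HnI n I)"
  shows "H = carrier (HnI n I)"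
  using I H
proof (induction I arbitrary: H rule: finite_ne_induct)
  case (singleton i)
  show ?case
  proof
    show "H \<subseteq> carrier (HnI n {i})" using subgroup.subset[OF singleton.prems(1)] .
    show "carrier (HnI n {i}) \<subseteq> H"
    proof
      fix g assume g: "g \<in> carrier (HnI n {i})"
      then have "g i \<in> (\<lambda>g. g i) ` H" using singleton.prems(2) HnI_memD(2)[OF g] by simp
      then obtain h where h: "h \<in> H" "h i = g i" by (metis imageE)
      then have "h \<in> carrier (HnI n {i})" using subgroup.subset[OF singleton.prems(1)] by blast
      then have "h = g"
        by (rule extensionalityI[OF HnI_memD(1) HnI_memD(1)[OF g]]) (use h(2) in simp)
      with h(1) show "g \<in> H" by simp
    qed
  qed
next
  case (insert i J)
  let ?I = "insert i J"
  have J: "?I - {i} = J" using insert.hyps(3) by blast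
  obtain j where j: "j \<in> J" using insert.hyps(2) by blast
  have hom: "group_hom (HnI n ?I) (HnI n J) (\<lambda>g. restrict g J)"
    by (rule group_hom_HnI_restrict) blast
  have "(\<lambda>g. restrict g J) ` H = carrier (HnI n J)"
  proof (rule insert.IH)
    show "subgroup ((\<lambda>g. restrict g J) ` H) (HnI n J)"
      by (rule group_hom.subgroup_img_is_subgroup[OF hom insert.prems(1)])
    show "\<forall>k\<in>J. (\<lambda>g. g k) ` (\<lambda>g. restrict g J) ` H = carrier (Hn n)"
      using insert.prems(2) by (auto simp: image_image cong: image_cong)
    show "escapes_F2_kernels ((\<lambda>g. restrict g J) ` H) (HnI n J)"
      using escapes_F2_kernels_image[OF hom HnI_restrict_surj insert.prems(3)] j by blast
  qed
  then have onto: "(\<lambda>g. restrict g (?I - {i})) ` H = carrier (HnI n (?I - {i}))"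
    by (simp only: J)
  have i: "i \<in> ?I" by simp
  have "i \<noteq> j" using insert.hyps(3) j by blast
  have "fibre_at n ?I i H \<lhd> Hn n"
    using normal_fibre_at[OF insert.prems(1) i] insert.prems(2) by blast
  moreover have "\<forall>a\<in>fibre_at n ?I i H. chi n a"
    using chi_fibre_at[OF insert.prems(1) i, of j] j \<open>i \<noteq> j\<close> by blast
  moreover obtain a0 where "a0 \<in> fibre_at n ?I i H" "\<not> evenperm (snd a0)"
    using fibre_at_contains_odd[OF insert.prems(1) i n _ onto insert.prems(3)] J insert.hyps(2) by blast
  ultimately have "{a \<in> carrier (Hn n). chi n a} \<subseteq> fibre_at n ?I i H"
    by (rule Hn_normal_contains_chi_kernel)
  then show ?case
    using eq_carrier_if_fibre_at_contains_chi_kernel[OF insert.prems(1) i _ _ onto] j \<open>i \<noteq> j\<close> by blast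
qed

theorem mainTheorem16:
  fixes n :: nat and I :: "'a set"
    and H :: "('a \<Rightarrow> (nat \<Rightarrow> bool) \<times> (nat \<Rightarrow> nat)) set"
  assumes "3 \<le> n" and "finite I" and "I \<noteq> {}"
    and "subgroup H (HnI n I)"
    and "H <#>\<^bsub>HnI n I\<^esub> Mgrp (HnI n I) = carrier (HnI n I)"
    and "\<forall>i\<in>I. (\<lambda>g. g i) ` H = carrier (Hn n)"
  shows "H = carrier (HnI n I)"
proof (rule HnI_subgroup_eq_carrier)
  show "2 \<le> n" using assms(1) by simp
  show "escapes_F2_kernels H (HnI n I)"
    using group.escapes_F2_kernels_if_supplements_Mgrp[OF group_HnI assms(4,5)] .
qed (use assms in auto)

end
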